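(* Let $G$ be of type $A_{n-1}$, let $1\le s,r\le n-1$ and $p=\lfloor rs/n\rfloor$. Then $$w_{s,r}=(s_s s_{s-1}\cdots s_{p+1})(s_{s+1}s_s\cdots s_{p+2})\cdots(s_{s+r-p-1}\cdots s_{r+1}s_r),$$ i.e. $w_{s,r}=\prod_{j=p+1}^{r}(s_{s+j-p-1}s_{s+j-p-2}\cdots s_j)$ with the factors ordered by increasing $j$.
   Context: $G$ is the simple adjoint group of type $A_{n-1}$ (i.e. $PSL(n,\mathbb{C})$) with maximal torus $T$, Borel $B\supseteq T$, simple roots $\alpha_1,\dots,\alpha_{n-1}$ in the standard numbering, simple reflections $s_i$, fundamental weights $\omega_i$ (all minuscule); $\lambda_s$ is the one-parameter subgroup of $T$ with $\langle\alpha_j,\lambda_s\rangle=\delta_{sj}$. $P=P_{S\setminus\{\alpha_r\}}$, $W^{S\setminus\{\alpha_r\}}$ the minimal coset representatives of $W/W_{S\setminus\{\alpha_r\}}$ with the Bruhat order. $w_{s,r}$ is the unique Bruhat-minimal element $w\in W^{S\setminus\{\alpha_r\}}$ with $\langle w(\omega_r),\lambda_s\rangle\le0$ (equivalently, such that the Schubert variety $X(w)=\overline{BwP/P}$ has a point at which some $\lambda_s(\mathbb{G}_m)$-invariant section of a positive power of $\mathcal{L}(m\omega_r)$ is nonzero, $m$ least with $m\omega_r$ in the root lattice). *)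

theory Defs
  imports Complex_Main "HOL-Combinatorics.Permutations"
begin

text \<open>Weyl group of type A_(n-1): permutations of {1..n} (as functions nat => nat
fixing everything outside {1..n}); the simple reflection s_i (1 <= i <= n-1)
is the transposition of i and i+1.  Products are function composition, so the
word [a,b,c] denotes s_a s_b s_c.\<close>

definition weyl :: "nat \<Rightarrow> (nat \<Rightarrow> nat) set" where
  "weyl n = {w. w permutes {1..n}}"

definition sref :: "nat \<Rightarrow> nat \<Rightarrow> nat" where
  "sref i = Transposition.transpose i (Suc i)"

definition word_prod :: "nat list \<Rightarrow> nat \<Rightarrow> nat" where
  "word_prod ws = foldr (\<lambda>i acc. sref i \<circ> acc) ws id"

definition coxeter_length :: "nat \<Rightarrow> (nat \<Rightarrow> nat) \<Rightarrow> nat" where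
  "coxeter_length n w =
     (LEAST k. \<exists>ws. length ws = k \<and> set ws \<subseteq> {1..<n} \<and> word_prod ws = w)"

definition bruhat_step :: "nat \<Rightarrow> (nat \<Rightarrow> nat) \<Rightarrow> (nat \<Rightarrow> nat) \<Rightarrow> bool" where
  "bruhat_step n u v \<longleftrightarrow> u \<in> weyl n \<and>
     (\<exists>i j. 1 \<le> i \<and> i < j \<and> j \<le> n \<and> v = u \<circ> Transposition.transpose i j
            \<and> coxeter_length n u < coxeter_length n v)"

definition bruhat_le :: "nat \<Rightarrow> (nat \<Rightarrow> nat) \<Rightarrow> (nat \<Rightarrow> nat) \<Rightarrow> bool" where
  "bruhat_le n = (bruhat_step n)\<^sup>*\<^sup>*"

definition min_coset_reps :: "nat \<Rightarrow> nat \<Rightarrow> (nat \<Rightarrow> nat) set" where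
  "min_coset_reps n r = {w \<in> weyl n.
     \<forall>i \<in> {1..<n} - {r}. coxeter_length n w < coxeter_length n (w \<circ> sref i)}"

text \<open>Weights in epsilon-coordinates: functions on {1..n} (modulo constants);
epsilon_i is the indicator of i, omega_r = eps_1 + ... + eps_r,
alpha_j = eps_j - eps_(j+1).  Weyl action: (w mu)(i) = mu (w^-1 i), so
w eps_i = eps_(w i).  The one-parameter subgroup lambda_s (coweight with
<alpha_j, lambda_s> = delta_sj) has coordinates [i <= s] - s/n (sum zero).\<close>

definition omega :: "nat \<Rightarrow> nat \<Rightarrow> real" where
  "omega r i = (if 1 \<le> i \<and> i \<le> r then 1 else 0)"

definition weyl_act :: "(nat \<Rightarrow> nat) \<Rightarrow> (nat \<Rightarrow> real) \<Rightarrow> nat \<Rightarrow> real" where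
  "weyl_act w \<mu> = \<mu> \<circ> inv w"

definition lam :: "nat \<Rightarrow> nat \<Rightarrow> nat \<Rightarrow> real" where
  "lam n s i = (if i \<le> s then 1 else 0) - real s / real n"

definition pairing :: "nat \<Rightarrow> (nat \<Rightarrow> real) \<Rightarrow> (nat \<Rightarrow> real) \<Rightarrow> real" where
  "pairing n \<mu> l = (\<Sum>i = 1..n. \<mu> i * l i)"

definition cond_set :: "nat \<Rightarrow> nat \<Rightarrow> nat \<Rightarrow> (nat \<Rightarrow> nat) set" where
  "cond_set n s r = {w \<in> min_coset_reps n r.
      pairing n (weyl_act w (omega r)) (lam n s) \<le> 0}"

definition w_sr :: "nat \<Rightarrow> nat \<Rightarrow> nat \<Rightarrow> nat \<Rightarrow> nat" where
  "w_sr n s r = (THE w. w \<in> cond_set n s r \<and>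
      (\<forall>v \<in> cond_set n s r. bruhat_le n v w \<longrightarrow> v = w))"

end

theory Submission
  imports Defs
begin

text \<open>
  In type A the Coxeter length of a permutation is its number of inversions, so the minimal
  coset representatives for the maximal parabolic subgroup omitting \<open>\<alpha>\<^sub>r\<close> are the
  Grassmannian permutations, increasing on \<open>{1..r}\<close> and on \<open>{r+1..n}\<close>. For them
  \<open>\<langle>w \<omega>\<^sub>r, \<lambda>\<^sub>s\<rangle> = #{k \<le> r. w k \<le> s} - rs/n\<close>, so \<open>w\<close> satisfies the condition iff at most
  \<open>p = \<lfloor>rs/n\<rfloor>\<close> of the values \<open>w 1 < \<dots> < w r\<close> are at most \<open>s\<close>. The given word is the
  Grassmannian permutation with values \<open>1, \<dots>, p, s+1, \<dots>, s+r-p\<close> on \<open>{1..r}\<close>, which is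
  therefore componentwise below every such \<open>w\<close>. A Grassmannian permutation that is componentwise
  below another is also below it in the Bruhat order: lowering the first value where they differ
  by one is a Bruhat step into another Grassmannian permutation, because the freed value lies in
  the tail. Bruhat steps increase the length, so the order is antisymmetric and this least element
  is the unique minimal one.
\<close>

lemma strict_mono_on_atLeastAtMostI:
  fixes f :: "nat \<Rightarrow> 'a::order"
  assumes "\<And>i. a \<le> i \<Longrightarrow> i < b \<Longrightarrow> f i < f (Suc i)"
  shows "strict_mono_on {a..b} f"
proof (rule strict_mono_onI)
  fix i j
  assume "i \<in> {a..b}" "j \<in> {a..b}" "i < j"
  then have "Suc i \<le> j" "j \<le> b" "a \<le> i"
    by auto
  then show "f i < f j"
  proof (induction j rule: dec_induct)
    case base
    then show ?case
      using assms by simp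
  next
    case (step m)
    then have "f i < f m" "f m < f (Suc m)"
      using assms by simp_all
    then show ?case
      by (rule order.strict_trans)
  qed
qed

lemma strict_mono_on_add_diff_le:
  fixes f :: "nat \<Rightarrow> nat"
  assumes "strict_mono_on {a..b} f" "a \<le> i" "i \<le> j" "j \<le> b"
  shows "f i + (j - i) \<le> f j"
  using assms(3,4)
proof (induction j rule: dec_induct)
  case (step m)
  then have "f m < f (Suc m)"
    using assms(1,2) by (intro strict_mono_onD[OF assms(1)]) auto
  with step show ?case
    by simp
qed simp

lemma strict_mono_on_eq_if_image_eq:
  fixes f g :: "nat \<Rightarrow> 'a::linorder"
  assumes f: "strict_mono_on {a..b} f" and g: "strict_mono_on {a..b} g"
    and image: "f ` {a..b} = g ` {a..b}" and x: "x \<in> {a..b}"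
  shows "f x = g x"
proof -
  have sorted: "sorted_wrt (<) (map h [a..<Suc b])" if "strict_mono_on {a..b} h" for h :: "nat \<Rightarrow> 'a"
    by (rule sorted_wrt_map_mono[OF sorted_wrt_upt]) (auto intro: strict_mono_onD[OF that])
  have "set (map g [a..<Suc b]) = set (map f [a..<Suc b])"
    using image by (simp only: set_map set_upt atLeastLessThanSuc_atLeastAtMost)
  then have "map g [a..<Suc b] = map f [a..<Suc b]"
    by (intro strict_sorted_equal sorted f g)
  then show ?thesis
    using x by (cases "x = b") (auto simp: map_eq_conv)
qed

lemma sref_apply: "sref a x = (if x = a then Suc a else if x = Suc a then a else x)"
  by (simp add: sref_def Transposition.transpose_def)

lemma sref_sref [simp]: "sref a (sref a x) = x"
  by (simp add: sref_apply)

lemma sref_comp_sref_comp [simp]: "sref a \<circ> (sref a \<circ> w) = w"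
  by (simp add: fun_eq_iff)

lemma comp_sref_comp_sref [simp]: "w \<circ> sref a \<circ> sref a = w"
  by (simp add: fun_eq_iff)

lemma inv_sref [simp]: "inv (sref a) = sref a"
  by (simp add: sref_def)

lemma sref_permutes: "1 \<le> a \<Longrightarrow> a < n \<Longrightarrow> sref a permutes {1..n}"
  unfolding sref_def by (rule permutes_swap_id) auto

lemma word_prod_Nil [simp]: "word_prod [] = id"
  by (simp add: word_prod_def)

lemma word_prod_Cons [simp]: "word_prod (a # ws) = sref a \<circ> word_prod ws"
  by (simp add: word_prod_def)

lemma word_prod_append: "word_prod (xs @ ys) = word_prod xs \<circ> word_prod ys"
  by (induction xs) auto

lemma word_prod_permutes: "set ws \<subseteq> {1..<n} \<Longrightarrow> word_prod ws permutes {1..n}"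
proof (induction ws)
  case (Cons a ws)
  then show ?case
    unfolding word_prod_Cons by (intro permutes_compose sref_permutes) auto
qed simp

lemma permutes_inv_in: "w permutes S \<Longrightarrow> x \<in> S \<Longrightarrow> inv w x \<in> S"
  by (simp add: permutes_in_image[OF permutes_inv])

section \<open>Coxeter length as the number of inversions\<close>

definition inversions :: "nat \<Rightarrow> (nat \<Rightarrow> nat) \<Rightarrow> (nat \<times> nat) set" where
  "inversions n w = {(i, j). 1 \<le> i \<and> i < j \<and> j \<le> n \<and> w j < w i}"

definition inversion_count :: "nat \<Rightarrow> (nat \<Rightarrow> nat) \<Rightarrow> nat" where
  "inversion_count n w = card (inversions n w)"

lemma finite_inversions: "finite (inversions n w)"
  by (rule finite_subset[of _ "{1..n} \<times> {1..n}"]) (auto simp: inversions_def)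

lemma inversion_count_id [simp]: "inversion_count n id = 0"
proof -
  have "inversions n id = {}"
    by (auto simp: inversions_def)
  then show ?thesis
    by (simp add: inversion_count_def)
qed

lemma sref_less_sref_iff:
  "sref a x < sref a y \<longleftrightarrow>
     (if x = a \<and> y = Suc a then False else if x = Suc a \<and> y = a then True else x < y)"
  by (auto simp: sref_apply)

lemma inversions_sref_comp:
  assumes w: "w permutes {1..n}" and a: "1 \<le> a" "a < n"
    and lt: "inv w a < inv w (Suc a)"
  shows "inversions n (sref a \<circ> w) = insert (inv w a, inv w (Suc a)) (inversions n w)"
proof (rule set_eqI, clarify)
  fix x y
  have w_eq_iff: "w z = b \<longleftrightarrow> z = inv w b" for z b
    using permutes_inv_eq[OF w] by metis
  show "(x, y) \<in> inversions n (sref a \<circ> w) \<longleftrightarrow>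
        (x, y) \<in> insert (inv w a, inv w (Suc a)) (inversions n w)"
  proof (cases "w x = a \<and> w y = Suc a")
    case True
    moreover have "inv w a \<in> {1..n}" "inv w (Suc a) \<in> {1..n}"
      using a by (simp_all add: permutes_inv_in[OF w, simplified])
    ultimately show ?thesis
      using lt by (auto simp: inversions_def sref_apply w_eq_iff)
  next
    case False
    then have other: "(x, y) \<noteq> (inv w a, inv w (Suc a))"
      by (auto simp: permutes_inverses(1)[OF w])
    have "\<not> (w x = Suc a \<and> w y = a \<and> x < y)"
      using lt by (auto simp: w_eq_iff)
    with False have "x < y \<Longrightarrow> sref a (w y) < sref a (w x) \<longleftrightarrow> w y < w x"
      by (auto simp: sref_less_sref_iff)
    with other show ?thesis
      unfolding inversions_def by auto
  qed
qed

lemma inversion_count_sref_comp_less: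
  assumes w: "w permutes {1..n}" and a: "1 \<le> a" "a < n"
    and lt: "inv w a < inv w (Suc a)"
  shows "inversion_count n (sref a \<circ> w) = Suc (inversion_count n w)"
proof -
  have "(inv w a, inv w (Suc a)) \<notin> inversions n w"
    using lt by (simp add: inversions_def permutes_inverses(1)[OF w])
  then show ?thesis
    by (simp add: inversion_count_def inversions_sref_comp[OF assms] finite_inversions)
qed

lemma inversion_count_sref_comp_greater:
  assumes w: "w permutes {1..n}" and a: "1 \<le> a" "a < n"
    and gt: "inv w (Suc a) < inv w a"
  shows "inversion_count n w = Suc (inversion_count n (sref a \<circ> w))"
proof -
  have v: "sref a \<circ> w permutes {1..n}"
    by (rule permutes_compose[OF w sref_permutes[OF a]])
  have "inv (sref a \<circ> w) = inv w \<circ> sref a"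
    by (simp add: o_inv_distrib permutes_bij[OF w] permutes_bij[OF sref_permutes[OF a]])
  then have "inv (sref a \<circ> w) a < inv (sref a \<circ> w) (Suc a)"
    using gt by (simp add: sref_apply)
  from inversion_count_sref_comp_less[OF v a this] show ?thesis
    by simp
qed

lemma inversion_count_inv_le:
  assumes w: "w permutes {1..n}"
  shows "inversion_count n (inv w) \<le> inversion_count n w"
proof -
  let ?flip = "\<lambda>(i, j). (inv w j, inv w i)"
  have "?flip ` inversions n (inv w) \<subseteq> inversions n w"
  proof clarify
    fix i j
    assume "(i, j) \<in> inversions n (inv w)"
    then have ij: "1 \<le> i" "i < j" "j \<le> n" "inv w j < inv w i"
      by (auto simp: inversions_def)
    have "inv w j \<in> {1..n}"
      by (rule permutes_inv_in[OF w]) (use ij in simp)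
    moreover have "inv w i \<in> {1..n}"
      by (rule permutes_inv_in[OF w]) (use ij in simp)
    ultimately show "(inv w j, inv w i) \<in> inversions n w"
      using ij by (simp add: inversions_def permutes_inverses(1)[OF w])
  qed
  moreover have "inj_on ?flip (inversions n (inv w))"
    using permutes_inj[OF permutes_inv[OF w]] by (auto intro!: inj_onI dest: injD)
  ultimately show ?thesis
    unfolding inversion_count_def by (intro card_inj_on_le finite_inversions)
qed

lemma inversion_count_inv:
  assumes w: "w permutes {1..n}"
  shows "inversion_count n (inv w) = inversion_count n w"
  using inversion_count_inv_le[OF w] inversion_count_inv_le[OF permutes_inv[OF w]]
  by (simp add: permutes_inv_inv[OF w])

lemma inversion_count_comp_sref_less:
  assumes w: "w permutes {1..n}" and a: "1 \<le> a" "a < n"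
    and lt: "w a < w (Suc a)"
  shows "inversion_count n (w \<circ> sref a) = Suc (inversion_count n w)"
proof -
  have wa: "w \<circ> sref a permutes {1..n}"
    by (rule permutes_compose[OF sref_permutes[OF a] w])
  have "inv (w \<circ> sref a) = sref a \<circ> inv w"
    by (simp add: o_inv_distrib permutes_bij[OF w] permutes_bij[OF sref_permutes[OF a]])
  moreover have "inversion_count n (sref a \<circ> inv w) = Suc (inversion_count n (inv w))"
    by (rule inversion_count_sref_comp_less[OF permutes_inv[OF w] a])
       (simp add: permutes_inv_inv[OF w] lt)
  ultimately show ?thesis
    using inversion_count_inv[OF w] inversion_count_inv[OF wa] by simp
qed

lemma inversion_count_comp_sref_greater:
  assumes w: "w permutes {1..n}" and a: "1 \<le> a" "a < n"
    and gt: "w (Suc a) < w a"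
  shows "inversion_count n w = Suc (inversion_count n (w \<circ> sref a))"
proof -
  have "inversion_count n ((w \<circ> sref a) \<circ> sref a) = Suc (inversion_count n (w \<circ> sref a))"
    by (rule inversion_count_comp_sref_less[OF permutes_compose[OF sref_permutes[OF a] w] a])
       (simp add: sref_apply gt)
  then show ?thesis
    by simp
qed

lemma permutes_eq_id_if_ascending:
  assumes w: "w permutes {1..n}" and asc: "\<And>i. 1 \<le> i \<Longrightarrow> i < n \<Longrightarrow> w i < w (Suc i)"
  shows "w = id"
proof
  fix x
  have mono: "strict_mono_on {1..n} w"
    using asc by (rule strict_mono_on_atLeastAtMostI)
  show "w x = id x"
  proof (cases "x \<in> {1..n}")
    case True
    then show ?thesis
      using strict_mono_on_eq_if_image_eq[OF mono strict_mono_on_id] permutes_image[OF w] by simp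
  next
    case False
    then show ?thesis
      by (simp add: permutes_not_in[OF w])
  qed
qed

lemma reduced_word_exists:
  assumes "w permutes {1..n}"
  shows "\<exists>ws. length ws = inversion_count n w \<and> set ws \<subseteq> {1..<n} \<and> word_prod ws = w"
  using assms
proof (induction "inversion_count n w" arbitrary: w rule: less_induct)
  case less
  show ?case
  proof (cases "\<exists>a. 1 \<le> a \<and> a < n \<and> w (Suc a) < w a")
    case True
    then obtain a where a: "1 \<le> a" "a < n" and descent: "w (Suc a) < w a"
      by blast
    have v: "w \<circ> sref a permutes {1..n}"
      by (rule permutes_compose[OF sref_permutes[OF a] less.prems])
    have count: "inversion_count n w = Suc (inversion_count n (w \<circ> sref a))"
      by (rule inversion_count_comp_sref_greater[OF less.prems a descent])
    obtain ws where ws: "length ws = inversion_count n (w \<circ> sref a)" "set ws \<subseteq> {1..<n}"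
        "word_prod ws = w \<circ> sref a"
      using less.hyps[OF _ v] count by auto
    show ?thesis
      by (rule exI[of _ "ws @ [a]"]) (use ws count a in \<open>simp add: word_prod_append\<close>)
  next
    case False
    then have "w = id"
      by (intro permutes_eq_id_if_ascending[OF less.prems])
         (metis linorder_neqE_nat permutes_inj[OF less.prems] injD n_not_Suc_n)
    then show ?thesis
      by simp
  qed
qed

lemma inversion_count_word_prod_le:
  "set ws \<subseteq> {1..<n} \<Longrightarrow> inversion_count n (word_prod ws) \<le> length ws"
proof (induction ws)
  case (Cons a ws)
  have a: "1 \<le> a" "a < n"
    using Cons.prems by auto
  have w: "word_prod ws permutes {1..n}"
    using Cons.prems by (intro word_prod_permutes) auto
  have "inv (word_prod ws) a \<noteq> inv (word_prod ws) (Suc a)"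
    using permutes_inj[OF permutes_inv[OF w]] by (metis injD n_not_Suc_n)
  then consider "inv (word_prod ws) a < inv (word_prod ws) (Suc a)"
    | "inv (word_prod ws) (Suc a) < inv (word_prod ws) a"
    by linarith
  then have "inversion_count n (sref a \<circ> word_prod ws) \<le> Suc (inversion_count n (word_prod ws))"
    by cases (use inversion_count_sref_comp_less[OF w a] inversion_count_sref_comp_greater[OF w a]
        in auto)
  moreover have "inversion_count n (word_prod ws) \<le> length ws"
    using Cons by simp
  ultimately show ?case
    unfolding word_prod_Cons length_Cons by linarith
qed simp

lemma coxeter_length_eq_inversion_count:
  assumes "w permutes {1..n}"
  shows "coxeter_length n w = inversion_count n w"
  unfolding coxeter_length_def
proof (rule Least_equality)
  show "\<exists>ws. length ws = inversion_count n w \<and> set ws \<subseteq> {1..<n} \<and> word_prod ws = w"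
    by (rule reduced_word_exists[OF assms])
next
  fix k
  assume "\<exists>ws. length ws = k \<and> set ws \<subseteq> {1..<n} \<and> word_prod ws = w"
  then show "inversion_count n w \<le> k"
    using inversion_count_word_prod_le by blast
qed

lemma coxeter_length_less_comp_sref_iff:
  assumes w: "w permutes {1..n}" and a: "1 \<le> a" "a < n"
  shows "coxeter_length n w < coxeter_length n (w \<circ> sref a) \<longleftrightarrow> w a < w (Suc a)"
proof -
  have "w a \<noteq> w (Suc a)"
    using permutes_inj[OF w] by (metis injD n_not_Suc_n)
  then consider "w a < w (Suc a)" | "w (Suc a) < w a"
    by linarith
  then show ?thesis
    using inversion_count_comp_sref_less[OF w a] inversion_count_comp_sref_greater[OF w a]
      coxeter_length_eq_inversion_count[OF w]
      coxeter_length_eq_inversion_count[OF permutes_compose[OF sref_permutes[OF a] w]]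
    by cases auto
qed

section \<open>Grassmannian permutations\<close>

definition grassmannian :: "nat \<Rightarrow> nat \<Rightarrow> (nat \<Rightarrow> nat) \<Rightarrow> bool" where
  "grassmannian n r w \<longleftrightarrow> w permutes {1..n} \<and> (\<forall>i \<in> {1..<n} - {r}. w i < w (Suc i))"

lemma min_coset_reps_eq_grassmannian: "min_coset_reps n r = {w. grassmannian n r w}"
proof -
  have "(\<forall>i \<in> {1..<n} - {r}. coxeter_length n w < coxeter_length n (w \<circ> sref i)) \<longleftrightarrow>
        (\<forall>i \<in> {1..<n} - {r}. w i < w (Suc i))" if "w permutes {1..n}" for w
    using coxeter_length_less_comp_sref_iff[OF that] by simp
  then show ?thesis
    by (auto simp: min_coset_reps_def grassmannian_def weyl_def)
qed

lemma grassmannian_strict_mono_on_head: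
  "grassmannian n r w \<Longrightarrow> r \<le> n \<Longrightarrow> strict_mono_on {1..r} w"
  by (rule strict_mono_on_atLeastAtMostI) (auto simp: grassmannian_def)

lemma grassmannian_strict_mono_on_tail:
  "grassmannian n r w \<Longrightarrow> strict_mono_on {Suc r..n} w"
  by (rule strict_mono_on_atLeastAtMostI) (auto simp: grassmannian_def)

lemma grassmannian_eqI:
  assumes v: "grassmannian n r v" and w: "grassmannian n r w"
    and head: "\<And>k. k \<in> {1..r} \<Longrightarrow> v k = w k"
  shows "v = w"
proof
  fix x
  have vp: "v permutes {1..n}" and wp: "w permutes {1..n}"
    using v w by (auto simp: grassmannian_def)
  have tail: "{Suc r..n} = {1..n} - {1..r}"
    by auto
  have "v ` {1..r} = w ` {1..r}"
    using head by auto
  then have "v ` {Suc r..n} = w ` {Suc r..n}"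
    unfolding tail image_set_diff[OF permutes_inj[OF vp]] image_set_diff[OF permutes_inj[OF wp]]
      permutes_image[OF vp] permutes_image[OF wp] by simp
  then consider "x \<in> {1..r}" | "x \<in> {Suc r..n}" | "x \<notin> {1..n}"
    by force
  then show "v x = w x"
  proof cases
    case 2
    then show ?thesis
      by (rule strict_mono_on_eq_if_image_eq[OF grassmannian_strict_mono_on_tail[OF v]
            grassmannian_strict_mono_on_tail[OF w] \<open>v ` {Suc r..n} = w ` {Suc r..n}\<close>])
  qed (use head permutes_not_in[OF vp] permutes_not_in[OF wp] in auto)
qed

lemma grassmannian_head_ge:
  assumes w: "grassmannian n r w" and r: "r \<le> n" and k: "k \<in> {1..r}"
  shows "k \<le> w k"
proof -
  have "w 1 \<in> {1..n}"
    using w k r permutes_in_image[of w "{1..n}" 1] by (simp add: grassmannian_def)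
  moreover have "w 1 + (k - 1) \<le> w k"
    using strict_mono_on_add_diff_le[OF grassmannian_strict_mono_on_head[OF w r], of 1 k] k by simp
  ultimately show ?thesis
    using k by auto
qed

lemma pairing_weyl_act_omega_lam:
  assumes w: "w permutes {1..n}" and r: "r \<le> n"
  shows "pairing n (weyl_act w (omega r)) (lam n s)
           = real (card {k \<in> {1..r}. w k \<le> s}) - real r * real s / real n"
proof -
  have "pairing n (weyl_act w (omega r)) (lam n s) = (\<Sum>k\<in>{1..n}. omega r k * lam n s (w k))"
    unfolding pairing_def weyl_act_def comp_def
    by (subst sum.reindex_bij_betw[symmetric, OF permutes_imp_bij[OF w]])
       (simp add: permutes_inverses(2)[OF w])
  also have "\<dots> = (\<Sum>k\<in>{1..r}. lam n s (w k))"
    using r by (intro sum.mono_neutral_cong_right) (auto simp: omega_def)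
  also have "\<dots> = (\<Sum>k\<in>{1..r}. (if w k \<le> s then 1 else 0) - real s / real n)"
    by (simp add: lam_def)
  also have "\<dots> = real (card {k \<in> {1..r}. w k \<le> s}) - real r * real s / real n"
    by (simp add: sum_subtractf sum.If_cases Int_def conj_commute)
  finally show ?thesis .
qed

lemma cond_set_iff:
  assumes n: "0 < n" and r: "r \<le> n"
  shows "w \<in> cond_set n s r \<longleftrightarrow>
           grassmannian n r w \<and> card {k \<in> {1..r}. w k \<le> s} \<le> r * s div n"
proof -
  have "pairing n (weyl_act w (omega r)) (lam n s) \<le> 0 \<longleftrightarrow> card {k \<in> {1..r}. w k \<le> s} \<le> r * s div n"
    if w: "w permutes {1..n}" for w
  proof -
    have "pairing n (weyl_act w (omega r)) (lam n s) \<le> 0 \<longleftrightarrow>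
            real (card {k \<in> {1..r}. w k \<le> s} * n) \<le> real (r * s)"
      using n by (simp add: pairing_weyl_act_omega_lam[OF w r] field_simps)
    also have "\<dots> \<longleftrightarrow> card {k \<in> {1..r}. w k \<le> s} \<le> r * s div n"
      using n by (simp only: of_nat_le_iff less_eq_div_iff_mult_less_eq)
    finally show ?thesis .
  qed
  then show ?thesis
    by (auto simp: cond_set_def min_coset_reps_eq_grassmannian grassmannian_def)
qed

section \<open>Bruhat order\<close>

lemma bruhat_le_imp_eq_or_length_less:
  "bruhat_le n u v \<Longrightarrow> u = v \<or> coxeter_length n u < coxeter_length n v"
  unfolding bruhat_le_def
  by (induction rule: rtranclp_induct) (auto simp: bruhat_step_def)

lemma bruhat_le_antisym: "bruhat_le n u v \<Longrightarrow> bruhat_le n v u \<Longrightarrow> u = v"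
  using bruhat_le_imp_eq_or_length_less[of n u v] bruhat_le_imp_eq_or_length_less[of n v u] by auto

lemma bruhat_step_sref_comp:
  assumes w: "w permutes {1..n}" and a: "1 \<le> a" "a < n"
    and gt: "inv w (Suc a) < inv w a"
  shows "bruhat_step n (sref a \<circ> w) w"
  unfolding bruhat_step_def
proof (intro conjI exI)
  have v: "sref a \<circ> w permutes {1..n}"
    by (rule permutes_compose[OF w sref_permutes[OF a]])
  then show "sref a \<circ> w \<in> weyl n"
    by (simp add: weyl_def)
  show "1 \<le> inv w (Suc a)" "inv w a \<le> n"
    using permutes_inv_in[OF w, of "Suc a"] permutes_inv_in[OF w, of a] a by auto
  show "inv w (Suc a) < inv w a"
    by (rule gt)
  have "sref a \<circ> w = w \<circ> Transposition.transpose (inv w (Suc a)) (inv w a)"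
    unfolding sref_def
    by (subst transpose_comp_eq[OF permutes_bij[OF w]]) (simp add: transpose_commute)
  then show "w = (sref a \<circ> w) \<circ> Transposition.transpose (inv w (Suc a)) (inv w a)"
    by (simp add: comp_assoc)
  show "coxeter_length n (sref a \<circ> w) < coxeter_length n w"
    using inversion_count_sref_comp_greater[OF w a gt]
    by (simp add: coxeter_length_eq_inversion_count[OF w] coxeter_length_eq_inversion_count[OF v])
qed

lemma grassmannian_sref_comp:
  assumes w: "grassmannian n r w" and a: "1 \<le> a" "a < n"
    and head: "inv w (Suc a) \<le> r" and tail: "r < inv w a"
  shows "grassmannian n r (sref a \<circ> w)"
  unfolding grassmannian_def
proof (intro conjI ballI)
  have wp: "w permutes {1..n}"
    using w by (simp add: grassmannian_def)
  then show "sref a \<circ> w permutes {1..n}"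
    by (rule permutes_compose[OF _ sref_permutes[OF a]])
  fix i
  assume i: "i \<in> {1..<n} - {r}"
  have "\<not> (w i = a \<and> w (Suc i) = Suc a)"
  proof
    assume "w i = a \<and> w (Suc i) = Suc a"
    then have "inv w a = i" "inv w (Suc a) = Suc i"
      by (simp_all add: permutes_inv_eq[OF wp])
    with head tail show False
      by simp
  qed
  moreover have "w i < w (Suc i)"
    using w i by (simp add: grassmannian_def)
  ultimately show "(sref a \<circ> w) i < (sref a \<circ> w) (Suc i)"
    by (auto simp: sref_less_sref_iff)
qed

lemma grassmannian_lower_head_value:
  assumes w: "grassmannian n r w" and r: "r \<le> n" and k: "k \<in> {1..r}" "w k = Suc a" and a: "1 \<le> a"
    and free: "a \<notin> w ` {1..r}"
  shows "grassmannian n r (sref a \<circ> w)" and "bruhat_step n (sref a \<circ> w) w"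
    and "i \<in> {1..r} \<Longrightarrow> (sref a \<circ> w) i = (if i = k then a else w i)"
proof -
  have wp: "w permutes {1..n}"
    using w by (simp add: grassmannian_def)
  have "k \<in> {1..n}"
    using k r by simp
  then have "w k \<in> {1..n}"
    using permutes_in_image[OF wp, of k] by simp
  then have "a < n"
    using k by simp
  have inv_Suc_a: "inv w (Suc a) = k"
    by (simp add: permutes_inv_eq[OF wp] k)
  have "inv w a \<in> {1..n}" "w (inv w a) = a"
    using a \<open>a < n\<close> by (simp_all add: permutes_inv_in[OF wp, simplified] permutes_inverses(1)[OF wp])
  moreover have "inv w a \<notin> {1..r}"
    using free \<open>w (inv w a) = a\<close> by (metis image_eqI)
  ultimately have inv_a: "r < inv w a"
    by auto
  show "grassmannian n r (sref a \<circ> w)"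
    using k inv_a by (intro grassmannian_sref_comp[OF w a \<open>a < n\<close>]) (simp_all add: inv_Suc_a)
  show "bruhat_step n (sref a \<circ> w) w"
    using k inv_a by (intro bruhat_step_sref_comp[OF wp a \<open>a < n\<close>]) (simp add: inv_Suc_a)
  assume i: "i \<in> {1..r}"
  have "w i \<noteq> Suc a" if "i \<noteq> k"
    using that permutes_inj[OF wp] by (simp add: inj_eq flip: k(2))
  moreover have "w i \<noteq> a"
    using free i by (metis image_eqI)
  ultimately show "(sref a \<circ> w) i = (if i = k then a else w i)"
    by (simp add: sref_apply k(2))
qed

lemma first_difference_pred_notin_head:
  assumes f: "grassmannian n r f" and w: "grassmannian n r w" and r: "r \<le> n"
    and k: "k \<in> {1..r}" "f k < w k" and agree: "\<And>i. i < k \<Longrightarrow> i \<in> {1..r} \<Longrightarrow> f i = w i"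
  shows "w k - 1 \<notin> w ` {1..r}"
proof
  assume "w k - 1 \<in> w ` {1..r}"
  then obtain i where i: "i \<in> {1..r}" and wi: "w i = w k - 1"
    by auto
  consider "i < k" | "i = k" | "k < i"
    by linarith
  then show False
  proof cases
    case 1
    have "f i < f k"
      using strict_mono_onD[OF grassmannian_strict_mono_on_head[OF f r] i k(1) 1] .
    with agree[OF 1 i] wi k(2) show False
      by linarith
  next
    case 2
    with wi k(2) show False
      by simp
  next
    case 3
    have "w k < w i"
      using strict_mono_onD[OF grassmannian_strict_mono_on_head[OF w r] k(1) i 3] .
    with wi show False
      by linarith
  qed
qed

lemma grassmannian_bruhat_le:
  assumes f: "grassmannian n r f" and w: "grassmannian n r w" and r: "r \<le> n"
    and le: "\<And>k. k \<in> {1..r} \<Longrightarrow> f k \<le> w k"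
  shows "bruhat_le n f w"
  using w le
proof (induction "coxeter_length n w" arbitrary: w rule: less_induct)
  case less
  show ?case
  proof (cases "w = f")
    case True
    then show ?thesis
      by (simp add: bruhat_le_def)
  next
    case False
    then have "\<exists>k. k \<in> {1..r} \<and> f k \<noteq> w k"
      using grassmannian_eqI[OF f less.prems(1)] by metis
    then obtain k where k: "k \<in> {1..r}" "f k \<noteq> w k"
      and agree: "\<And>i. i < k \<Longrightarrow> i \<in> {1..r} \<Longrightarrow> f i = w i"
      using exists_least_iff[of "\<lambda>k. k \<in> {1..r} \<and> f k \<noteq> w k"] by blast
    have fk: "f k < w k"
      using less.prems(2)[OF k(1)] k(2) by simp
    define a where "a = w k - 1"
    have wk: "w k = Suc a" and a: "1 \<le> a" "f k \<le> a"
      using fk grassmannian_head_ge[OF f r k(1)] k(1) unfolding a_def by auto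
    have free: "a \<notin> w ` {1..r}"
      using first_difference_pred_notin_head[OF f less.prems(1) r k(1) fk agree] wk by simp
    note lower = grassmannian_lower_head_value[OF less.prems(1) r k(1) wk a(1) free]
    have "coxeter_length n (sref a \<circ> w) < coxeter_length n w"
      using lower(2) unfolding bruhat_step_def by blast
    moreover have "f i \<le> (sref a \<circ> w) i" if "i \<in> {1..r}" for i
      using lower(3)[OF that] less.prems(2)[OF that] a(2) by simp
    ultimately have "bruhat_le n f (sref a \<circ> w)"
      using less.hyps lower(1) by blast
    then show ?thesis
      using lower(2) unfolding bruhat_le_def by (meson rtranclp.rtrancl_into_rtrancl)
  qed
qed

section \<open>Block rotations\<close>

definition block_rotate :: "nat \<Rightarrow> nat \<Rightarrow> nat \<Rightarrow> nat \<Rightarrow> nat" where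
  "block_rotate p r d k =
     (if k \<le> p then k else if k \<le> r then k + d else if k \<le> r + d then k - (r - p) else k)"

lemma block_rotate_eq_id: "r \<le> p \<Longrightarrow> block_rotate p r d = id"
  by (auto simp: fun_eq_iff block_rotate_def)

lemma block_rotate_comp:
  "p \<le> q \<Longrightarrow> q \<le> r \<Longrightarrow> block_rotate p q d \<circ> block_rotate q r d = block_rotate p r d"
  by (auto simp: fun_eq_iff block_rotate_def)

lemma word_prod_rev_upt: "word_prod (rev [Suc p..<Suc p + d]) = block_rotate p (Suc p) d"
proof (induction d)
  case (Suc d)
  have "rev [Suc p..<Suc p + Suc d] = (Suc p + d) # rev [Suc p..<Suc p + d]"
    by simp
  then show ?case
    using Suc by (auto simp: fun_eq_iff block_rotate_def sref_apply)
qed (auto simp: fun_eq_iff block_rotate_def)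

lemma word_prod_block_rotate:
  "word_prod (concat (map (\<lambda>j. rev [j..<j + d]) [Suc p..<Suc r])) = block_rotate p r d"
proof (induction r)
  case (Suc r)
  show ?case
  proof (cases "p \<le> r")
    case True
    have "[Suc p..<Suc (Suc r)] = [Suc p..<Suc r] @ [Suc r]"
      using True by simp
    then have "word_prod (concat (map (\<lambda>j. rev [j..<j + d]) [Suc p..<Suc (Suc r)])) =
        word_prod (concat (map (\<lambda>j. rev [j..<j + d]) [Suc p..<Suc r])) \<circ>
        word_prod (rev [Suc r..<Suc r + d])"
      by (simp only: map_append concat_append word_prod_append) simp
    also have "\<dots> = block_rotate p r d \<circ> block_rotate r (Suc r) d"
      by (simp only: Suc.IH word_prod_rev_upt)
    also have "\<dots> = block_rotate p (Suc r) d"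
      using True by (simp add: block_rotate_comp)
    finally show ?thesis .
  qed (simp add: block_rotate_eq_id)
qed (simp add: block_rotate_eq_id)

lemma word_prod_eq_block_rotate:
  assumes "p \<le> s"
  shows "word_prod (concat (map (\<lambda>j. rev [j ..< s + j - p]) [p + 1 ..< r + 1])) =
           block_rotate p r (s - p)"
proof -
  have "map (\<lambda>j. rev [j ..< s + j - p]) [p + 1 ..< r + 1] =
        map (\<lambda>j. rev [j ..< j + (s - p)]) [Suc p ..< Suc r]"
    using assms by (simp add: add.commute)
  then show ?thesis
    by (simp only: word_prod_block_rotate)
qed

lemma block_rotate_permutes:
  assumes "r + d \<le> n"
  shows "block_rotate p r d permutes {1..n}"
proof -
  have "set (concat (map (\<lambda>j. rev [j..<j + d]) [Suc p..<Suc r])) \<subseteq> {1..<n}"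
    using assms by auto
  then show ?thesis
    unfolding word_prod_block_rotate[symmetric] by (rule word_prod_permutes)
qed

lemma block_rotate_grassmannian: "r + d \<le> n \<Longrightarrow> grassmannian n r (block_rotate p r d)"
  using block_rotate_permutes[of r d n p] by (auto simp: grassmannian_def block_rotate_def)

lemma card_block_rotate_le:
  assumes "p \<le> r" "p \<le> s"
  shows "card {k \<in> {1..r}. block_rotate p r (s - p) k \<le> s} = p"
proof -
  have "{k \<in> {1..r}. block_rotate p r (s - p) k \<le> s} = {1..p}"
    using assms by (auto simp: block_rotate_def)
  then show ?thesis
    by simp
qed

lemma grassmannian_gt_if_card_le:
  assumes w: "grassmannian n r w" and r: "r \<le> n" and p: "p < r"
    and count: "card {k \<in> {1..r}. w k \<le> s} \<le> p"
  shows "s < w (Suc p)"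
proof (rule ccontr)
  assume "\<not> s < w (Suc p)"
  have "{1..Suc p} \<subseteq> {k \<in> {1..r}. w k \<le> s}"
  proof
    fix i
    assume i: "i \<in> {1..Suc p}"
    then have "w i \<le> w (Suc p)"
      using strict_mono_on_leD[OF grassmannian_strict_mono_on_head[OF w r], of i "Suc p"] p by simp
    with i p \<open>\<not> s < w (Suc p)\<close> show "i \<in> {k \<in> {1..r}. w k \<le> s}"
      by simp
  qed
  then have "Suc p \<le> card {k \<in> {1..r}. w k \<le> s}"
    using card_mono[of "{k \<in> {1..r}. w k \<le> s}" "{1..Suc p}"] by simp
  with count show False
    by simp
qed

lemma block_rotate_le_grassmannian:
  assumes w: "grassmannian n r w" and r: "r \<le> n" and count: "card {k \<in> {1..r}. w k \<le> s} \<le> p"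
    and k: "k \<in> {1..r}"
  shows "block_rotate p r (s - p) k \<le> w k"
proof (cases "k \<le> p")
  case True
  then show ?thesis
    using grassmannian_head_ge[OF w r k] by (simp add: block_rotate_def)
next
  case False
  have "s < w (Suc p)"
    using grassmannian_gt_if_card_le[OF w r _ count] False k by simp
  moreover have "w (Suc p) + (k - Suc p) \<le> w k"
    using strict_mono_on_add_diff_le[OF grassmannian_strict_mono_on_head[OF w r], of "Suc p" k] False k
    by simp
  ultimately show ?thesis
    using False k grassmannian_head_ge[OF w r k] by (simp add: block_rotate_def)
qed

section \<open>The minimal element\<close>

lemma mult_div_le:
  fixes r s n :: nat
  assumes "r \<le> n"
  shows "r * s div n \<le> s"
proof (cases "n = 0")
  case False
  have "r * s div n \<le> n * s div n"
    using assms by (intro div_le_mono) simp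
  with False show ?thesis
    by simp
qed simp

lemma add_le_add_mult_div:
  fixes r s n :: nat
  assumes "0 < n" "r \<le> n" "s \<le> n"
  shows "r + s \<le> n + r * s div n"
proof -
  have "int ((r + s - n) * n) \<le> int (r * s)"
  proof (cases "n \<le> r + s")
    case True
    have "0 \<le> (int n - int r) * (int n - int s)"
      using assms by simp
    moreover have "int ((r + s - n) * n) = (int r + int s - int n) * int n"
      using True by (simp add: of_nat_diff)
    ultimately show ?thesis
      by (simp add: algebra_simps)
  qed simp
  then have "r + s - n \<le> r * s div n"
    using assms(1) by (simp only: of_nat_le_iff less_eq_div_iff_mult_less_eq)
  then show ?thesis
    by simp
qed

lemma block_rotate_least_in_cond_set:
  fixes n s r :: nat
  assumes n: "0 < n" "r \<le> n" "s \<le> n"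
  defines "p \<equiv> r * s div n"
  shows "block_rotate p r (s - p) \<in> cond_set n s r"
    and "w \<in> cond_set n s r \<Longrightarrow> bruhat_le n (block_rotate p r (s - p)) w"
proof -
  have p: "p \<le> r" "p \<le> s"
    unfolding p_def using mult_div_le[OF n(3), of r] mult_div_le[OF n(2), of s]
    by (simp_all add: mult.commute)
  have f: "grassmannian n r (block_rotate p r (s - p))"
    using add_le_add_mult_div[OF n] p by (intro block_rotate_grassmannian) (simp add: p_def)
  have cond: "v \<in> cond_set n s r \<longleftrightarrow> grassmannian n r v \<and> card {k \<in> {1..r}. v k \<le> s} \<le> p"
    for v
    unfolding p_def using n by (intro cond_set_iff)
  show "block_rotate p r (s - p) \<in> cond_set n s r"
    using f card_block_rotate_le[OF p] by (simp add: cond)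
  assume "w \<in> cond_set n s r"
  then have w: "grassmannian n r w" and count: "card {k \<in> {1..r}. w k \<le> s} \<le> p"
    by (simp_all add: cond)
  show "bruhat_le n (block_rotate p r (s - p)) w"
    using block_rotate_le_grassmannian[OF w n(2) count] by (intro grassmannian_bruhat_le[OF f w n(2)])
qed

lemma the_minimal_eq_least:
  assumes least: "x \<in> S" "\<And>y. y \<in> S \<Longrightarrow> R x y"
    and antisym: "\<And>x y. R x y \<Longrightarrow> R y x \<Longrightarrow> x = y"
  shows "(THE m. m \<in> S \<and> (\<forall>y \<in> S. R y m \<longrightarrow> y = m)) = x"
proof (rule the_equality)
  show "x \<in> S \<and> (\<forall>y \<in> S. R y x \<longrightarrow> y = x)"
    using least antisym by blast
next
  fix m
  assume "m \<in> S \<and> (\<forall>y \<in> S. R y m \<longrightarrow> y = m)"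
  then show "m = x"
    using least by blast
qed

theorem lemma5p8:
  fixes n s r :: nat
  assumes "1 \<le> s" "s \<le> n - 1" "1 \<le> r" "r \<le> n - 1"
  shows "w_sr n s r =
    word_prod (concat (map (\<lambda>j. rev [j ..< s + j - (r * s div n)])
                           [r * s div n + 1 ..< r + 1]))"
proof -
  define p where "p = r * s div n"
  have n: "0 < n" "r \<le> n" "s \<le> n"
    using assms by auto
  have "p \<le> s"
    unfolding p_def using n(2) by (rule mult_div_le)
  note least = block_rotate_least_in_cond_set[OF n, folded p_def]
  show ?thesis
    unfolding w_sr_def p_def[symmetric] word_prod_eq_block_rotate[OF \<open>p \<le> s\<close>]
    by (rule the_minimal_eq_least[where R = "bruhat_le n", OF least bruhat_le_antisym])
qed

end
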